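(* Let $G=(U,E)$ be a connected graph with $n=|U|$ vertices. Then there exists a category system $\mathcal S\subset 2^U$ such that the greedy category-based routing strategy ROUTING correctly routes messages between all pairs of vertices of $G$ and such that $\operatorname{memdim}(\mathcal S)=O\big((\operatorname{diam}(G)+\log n)^2\big)$.
   Context: A category system for a graph $G=(U,E)$ is a family $\mathcal S\subset 2^U$ of subsets of the vertex set. For $u\in U$ let $\mathrm{cat}(u)=\{C\in\mathcal S: u\in C\}$. The membership dimension is $\operatorname{memdim}(\mathcal S)=\max_{u\in U}|\mathrm{cat}(u)|$. For $s,t\in U$ define $d(s,t)=|\mathrm{cat}(t)\setminus \mathrm{cat}(s)|$. $N(u)$ denotes the set of neighbors of $u$ in $G$, and $\operatorname{diam}(G)$ is the maximum over pairs of vertices of their shortest-path distance in $G$. The strategy ROUTING is: a node $u$ holding a message for destination $w\neq u$ forwards it to a neighbor $v\in N(u)$ with $d(v,w)<d(u,w)$. ROUTING correctly routes messages between all pairs of vertices if for every ordered pair of distinct vertices $u,w$ there is a neighbor $v\in N(u)$ with $d(v,w)<d(u,w)$ (so that, since $d$ takes nonnegative integer values and strictly decreases along the route, every message from any source is delivered to its destination). *)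

theory Defs
  imports Complex_Main
begin

definition simple_graph :: "'a set \<Rightarrow> ('a \<Rightarrow> 'a \<Rightarrow> bool) \<Rightarrow> bool" where
  "simple_graph U E \<longleftrightarrow> finite U \<and> (\<forall>u v. E u v \<longrightarrow> u \<in> U \<and> v \<in> U)
     \<and> (\<forall>u v. E u v \<longrightarrow> E v u) \<and> (\<forall>u. \<not> E u u)"

fun is_walk :: "('a \<Rightarrow> 'a \<Rightarrow> bool) \<Rightarrow> 'a list \<Rightarrow> bool" where
  "is_walk E [] = True"
| "is_walk E [x] = True"
| "is_walk E (x # y # xs) = (E x y \<and> is_walk E (y # xs))"

definition walk_of_len :: "('a \<Rightarrow> 'a \<Rightarrow> bool) \<Rightarrow> nat \<Rightarrow> 'a \<Rightarrow> 'a \<Rightarrow> bool" where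
  "walk_of_len E k u v \<longleftrightarrow> (\<exists>xs. length xs = Suc k \<and> hd xs = u \<and> last xs = v \<and> is_walk E xs)"

definition connected_graph :: "'a set \<Rightarrow> ('a \<Rightarrow> 'a \<Rightarrow> bool) \<Rightarrow> bool" where
  "connected_graph U E \<longleftrightarrow> U \<noteq> {} \<and> (\<forall>u\<in>U. \<forall>v\<in>U. \<exists>k. walk_of_len E k u v)"

definition graph_dist :: "('a \<Rightarrow> 'a \<Rightarrow> bool) \<Rightarrow> 'a \<Rightarrow> 'a \<Rightarrow> nat" where
  "graph_dist E u v = (LEAST k. walk_of_len E k u v)"

definition diam :: "'a set \<Rightarrow> ('a \<Rightarrow> 'a \<Rightarrow> bool) \<Rightarrow> nat" where
  "diam U E = Max {graph_dist E u v | u v. u \<in> U \<and> v \<in> U}"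

definition cat :: "'a set set \<Rightarrow> 'a \<Rightarrow> 'a set set" where
  "cat S u = {C \<in> S. u \<in> C}"

definition memdim :: "'a set \<Rightarrow> 'a set set \<Rightarrow> nat" where
  "memdim U S = Max ((\<lambda>u. card (cat S u)) ` U)"

definition cdist :: "'a set set \<Rightarrow> 'a \<Rightarrow> 'a \<Rightarrow> nat" where
  "cdist S s t = card (cat S t - cat S s)"

definition routing_correct :: "'a set \<Rightarrow> ('a \<Rightarrow> 'a \<Rightarrow> bool) \<Rightarrow> 'a set set \<Rightarrow> bool" where
  "routing_correct U E S \<longleftrightarrow>
     (\<forall>u\<in>U. \<forall>w\<in>U. u \<noteq> w \<longrightarrow> (\<exists>v. E u v \<and> cdist S v w < cdist S u w))"

end

(*
  Route along a breadth-first spanning tree T rooted at some vertex, so that every depth is at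
  most diam G: from u, step down towards the target w if w lies below u, and up otherwise.
  Give the children c of each vertex x disjoint intervals of lengths |T_c| inside [0, |T_x|),
  heaviest first; two siblings then differ in some bit i of their positions with
  rank c <= i <= rank x, where rank y = floor (log2 |T_y|).  For every vertex x, bit index i,
  bit value b and depth bound j there is one category: x together with the descendants whose
  branch at x has bit i equal to b, or whose depth is at most j.  Such a category is closed
  under moving towards x, so no routing step leaves a category containing both endpoints, and
  a bit separating the relevant siblings gives a category that the step enters.  A vertex v
  lies only in categories of its ancestors x with i between the ranks of x and of the next
  vertex towards v; these ranges telescope along the root path, which leaves
  O((diam G + log n) * (diam G + 1)) categories per vertex.
*)

theory Submission
  imports Defs "HOL-Library.Discrete_Functions"
begin

lemma heavy_first_packing:
  fixes w :: "'a \<Rightarrow> nat"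
  assumes "finite A" "\<forall>c\<in>A. 0 < w c"
  shows "\<exists>s. inj_on s A \<and> (\<forall>c\<in>A. s c + w c \<le> sum w A) \<and>
    (\<forall>c\<in>A. \<forall>c'\<in>A. s c < s c' \<longrightarrow> s c + w c \<le> s c' \<and> w c' \<le> w c)"
  using assms
proof (induction A rule: finite_ranking_induct[where f = w])
  case (insert x A)
  show ?case
  proof (cases "x \<in> A")
    case True
    then show ?thesis using insert by (simp add: insert_absorb)
  next
    case False
    obtain s where s: "inj_on s A" "\<forall>c\<in>A. s c + w c \<le> sum w A"
      "\<forall>c\<in>A. \<forall>c'\<in>A. s c < s c' \<longrightarrow> s c + w c \<le> s c' \<and> w c' \<le> w c"
      using insert by auto
    define s' where "s' c = (if c = x then 0 else s c + w x)" for c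
    have "0 < w x" using insert.prems by simp
    then have "inj_on s' (insert x A)"
      using s(1) False by (auto simp: s'_def inj_on_def)
    moreover have "\<forall>c\<in>insert x A. s' c + w c \<le> sum w (insert x A)"
      "\<forall>c\<in>insert x A. \<forall>c'\<in>insert x A. s' c < s' c' \<longrightarrow> s' c + w c \<le> s' c' \<and> w c' \<le> w c"
      using s insert False by (auto simp: s'_def)
    ultimately show ?thesis by blast
  qed
qed simp

lemma exists_bit_neq_if_far_apart:
  fixes a b :: nat
  assumes "a + 2 ^ m \<le> b" "b < 2 ^ Suc T"
  shows "\<exists>i. m \<le> i \<and> i \<le> T \<and> bit a i \<noteq> bit b i"
proof (rule ccontr)
  assume "\<not> ?thesis"
  then have agree: "bit a i = bit b i" if "m \<le> i" "i \<le> T" for i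
    using that by blast
  have high_bits: "\<not> bit x i" if "x < 2 ^ Suc T" "T < i" for x :: nat and i
    using that order_less_le_trans[OF that(1) power_increasing[of "Suc T" i "2::nat"]]
    by (simp add: bit_iff_odd)
  have shift: "bit (x div 2 ^ m) n = bit x (m + n)" for x :: nat and n
    by (simp add: bit_iff_odd div_exp_eq)
  have "a div 2 ^ m = b div 2 ^ m"
  proof (rule bit_eqI)
    fix n
    show "bit (a div 2 ^ m) n = bit (b div 2 ^ m) n"
      unfolding shift using agree[of "m + n"] high_bits[of a "m + n"] high_bits[of b "m + n"] assms
      by (cases "m + n \<le> T") auto
  qed
  then have "a div 2 ^ m * 2 ^ m + b mod 2 ^ m = b"
    using div_mult_mod_eq[of b "2 ^ m"] by simp
  moreover have "a div 2 ^ m * 2 ^ m \<le> a" by (rule div_times_less_eq_dividend)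
  moreover have "b mod 2 ^ m < 2 ^ m" by simp
  ultimately have "b < a + 2 ^ m" by linarith
  then show False using assms(1) by simp
qed

lemma sum_telescope_antimono_nat:
  fixes f :: "nat \<Rightarrow> nat"
  assumes "\<forall>k<n. f (Suc k) \<le> f k"
  shows "(\<Sum>k<n. f k + 1 - f (Suc k)) + f n = f 0 + n"
  using assms by (induction n) auto

definition membership_bound :: "nat \<Rightarrow> nat \<Rightarrow> nat" where
  "membership_bound L H = 1 + 2 * (L + 1) * (H + 1) + 2 * (H + 1) * (L + H)"

lemma membership_bound_mono: "H \<le> H' \<Longrightarrow> membership_bound L H \<le> membership_bound L H'"
  unfolding membership_bound_def by (intro add_mono mult_le_mono order.refl) simp_all

lemma cdist_less_if_gains_category:
  assumes "finite S" "\<forall>C\<in>S. w \<in> C \<and> u \<in> C \<longrightarrow> v \<in> C"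
    and "C \<in> S" "w \<in> C" "v \<in> C" "u \<notin> C"
  shows "cdist S v w < cdist S u w"
proof -
  have "cat S w - cat S v \<subset> cat S w - cat S u"
    using assms(2-6) unfolding cat_def by blast
  moreover have "finite (cat S w - cat S u)" using assms(1) unfolding cat_def by simp
  ultimately show ?thesis unfolding cdist_def by (rule psubset_card_mono[rotated])
qed

section \<open>Walks and distances\<close>

lemma is_walk_snoc:
  "is_walk E (xs @ [y]) \<longleftrightarrow> is_walk E xs \<and> (xs \<noteq> [] \<longrightarrow> E (last xs) y)"
  by (induction E xs rule: is_walk.induct) auto

lemma walk_of_len_0_iff: "walk_of_len E 0 u v \<longleftrightarrow> u = v"
  unfolding walk_of_len_def by (auto simp: length_Suc_conv)

lemma walk_of_len_Suc_iff:
  "walk_of_len E (Suc k) u w \<longleftrightarrow> (\<exists>p. walk_of_len E k u p \<and> E p w)"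
proof
  assume "walk_of_len E (Suc k) u w"
  then obtain xs where xs: "length xs = Suc (Suc k)" "hd xs = u" "last xs = w" "is_walk E xs"
    unfolding walk_of_len_def by blast
  define ys where "ys = butlast xs"
  have ys: "xs = ys @ [w]" "ys \<noteq> []"
    using xs append_butlast_last_id[of xs] unfolding ys_def by (auto simp: length_Suc_conv)
  then have "walk_of_len E k u (last ys)"
    unfolding walk_of_len_def using xs is_walk_snoc[of E ys w] by auto
  moreover have "E (last ys) w" using xs ys is_walk_snoc[of E ys w] by auto
  ultimately show "\<exists>p. walk_of_len E k u p \<and> E p w" by blast
next
  assume "\<exists>p. walk_of_len E k u p \<and> E p w"
  then obtain p xs where "length xs = Suc k" "hd xs = u" "last xs = p" "is_walk E xs" "E p w"
    unfolding walk_of_len_def by blast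
  then show "walk_of_len E (Suc k) u w"
    unfolding walk_of_len_def using is_walk_snoc[of E xs w]
    by (intro exI[of _ "xs @ [w]"]) (auto simp: hd_append)
qed

lemma graph_dist_self [simp]: "graph_dist E u u = 0"
  unfolding graph_dist_def by (rule Least_eq_0) (simp add: walk_of_len_0_iff)

lemma graph_dist_le: "walk_of_len E k u v \<Longrightarrow> graph_dist E u v \<le> k"
  unfolding graph_dist_def by (rule Least_le)

lemma walk_of_len_graph_dist:
  "connected_graph U E \<Longrightarrow> u \<in> U \<Longrightarrow> v \<in> U \<Longrightarrow> walk_of_len E (graph_dist E u v) u v"
  unfolding graph_dist_def connected_graph_def by (meson LeastI_ex)

lemma graph_dist_eq_0_iff:
  "connected_graph U E \<Longrightarrow> u \<in> U \<Longrightarrow> v \<in> U \<Longrightarrow> graph_dist E u v = 0 \<longleftrightarrow> u = v"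
  using walk_of_len_graph_dist walk_of_len_0_iff by fastforce

lemma graph_dist_le_diam:
  assumes "finite U" "u \<in> U" "v \<in> U"
  shows "graph_dist E u v \<le> diam U E"
proof -
  have "{graph_dist E u v | u v. u \<in> U \<and> v \<in> U} = (\<lambda>(u, v). graph_dist E u v) ` (U \<times> U)"
    by auto
  then show ?thesis
    unfolding diam_def using assms by (intro Max_ge) auto
qed

lemma exists_neighbour_closer:
  assumes "simple_graph U E" "connected_graph U E" "r \<in> U" "y \<in> U" "y \<noteq> r"
  shows "\<exists>p. E p y \<and> Suc (graph_dist E r p) = graph_dist E r y"
proof -
  have "graph_dist E r y \<noteq> 0" using graph_dist_eq_0_iff[OF assms(2-4)] assms(5) by simp
  then obtain k where k: "graph_dist E r y = Suc k" using not0_implies_Suc by blast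
  then obtain p where p: "walk_of_len E k r p" "E p y"
    using walk_of_len_graph_dist[OF assms(2-4)] unfolding k walk_of_len_Suc_iff by blast
  have "p \<in> U" using assms(1) p(2) unfolding simple_graph_def by blast
  then have "walk_of_len E (Suc (graph_dist E r p)) r y"
    unfolding walk_of_len_Suc_iff using walk_of_len_graph_dist[OF assms(2,3)] p(2) by blast
  then have "graph_dist E r y \<le> Suc (graph_dist E r p)" by (rule graph_dist_le)
  moreover have "graph_dist E r p \<le> k" using p(1) by (rule graph_dist_le)
  ultimately show ?thesis using k p(2) by auto
qed

section \<open>Rooted trees\<close>

locale rooted_tree =
  fixes U :: "'a set" and root :: 'a and parent :: "'a \<Rightarrow> 'a" and depth :: "'a \<Rightarrow> nat"
  assumes finite_U: "finite U"
    and depth_root: "depth root = 0"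
    and parent_in_U: "y \<in> U \<Longrightarrow> y \<noteq> root \<Longrightarrow> parent y \<in> U"
    and depth_parent: "y \<in> U \<Longrightarrow> y \<noteq> root \<Longrightarrow> Suc (depth (parent y)) = depth y"
begin

lemma depth_eq_0_iff: "y \<in> U \<Longrightarrow> depth y = 0 \<longleftrightarrow> y = root"
  using depth_parent depth_root by fastforce

definition ancestor :: "nat \<Rightarrow> 'a \<Rightarrow> 'a" where
  "ancestor d y = (parent ^^ (depth y - d)) y"

lemma funpow_parent:
  "y \<in> U \<Longrightarrow> k \<le> depth y \<Longrightarrow> (parent ^^ k) y \<in> U \<and> depth ((parent ^^ k) y) = depth y - k"
proof (induction k)
  case (Suc k)
  then have "(parent ^^ k) y \<noteq> root" using depth_eq_0_iff by force
  then show ?case using Suc parent_in_U depth_parent by force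
qed simp

lemma ancestor_in_U: "y \<in> U \<Longrightarrow> d \<le> depth y \<Longrightarrow> ancestor d y \<in> U"
  and depth_ancestor: "y \<in> U \<Longrightarrow> d \<le> depth y \<Longrightarrow> depth (ancestor d y) = d"
  unfolding ancestor_def using funpow_parent[of y "depth y - d"] by auto

lemma ancestor_depth [simp]: "ancestor (depth y) y = y"
  unfolding ancestor_def by simp

lemma ancestor_ancestor:
  assumes "y \<in> U" "d \<le> e" "e \<le> depth y"
  shows "ancestor d (ancestor e y) = ancestor d y"
proof -
  have "depth y - d = (e - d) + (depth y - e)" using assms by simp
  then show ?thesis
    unfolding ancestor_def depth_ancestor[OF assms(1,3), unfolded ancestor_def]
    by (simp add: funpow_add)
qed

lemma parent_ancestor_Suc:
  assumes "y \<in> U" "d < depth y"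
  shows "parent (ancestor (Suc d) y) = ancestor d y"
proof -
  have "depth y - d = Suc (depth y - Suc d)" using assms(2) by simp
  then show ?thesis unfolding ancestor_def by simp
qed

definition is_ancestor :: "'a \<Rightarrow> 'a \<Rightarrow> bool" where
  "is_ancestor x y \<longleftrightarrow> y \<in> U \<and> depth x \<le> depth y \<and> ancestor (depth x) y = x"

lemma is_ancestor_refl: "y \<in> U \<Longrightarrow> is_ancestor y y"
  unfolding is_ancestor_def by simp

lemma is_ancestor_in_U: "is_ancestor x y \<Longrightarrow> x \<in> U \<and> y \<in> U"
  unfolding is_ancestor_def using ancestor_in_U by metis

lemma is_ancestor_eq_if_depth_le: "is_ancestor x y \<Longrightarrow> depth y \<le> depth x \<Longrightarrow> x = y"
  unfolding is_ancestor_def by (metis ancestor_depth le_antisym)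

lemma depth_less_if_proper_ancestor: "is_ancestor x y \<Longrightarrow> x \<noteq> y \<Longrightarrow> depth x < depth y"
  using is_ancestor_eq_if_depth_le by (meson not_le)

lemma is_ancestor_trans:
  assumes "is_ancestor x y" "is_ancestor y z"
  shows "is_ancestor x z"
proof -
  have "ancestor (depth x) (ancestor (depth y) z) = ancestor (depth x) z"
    using ancestor_ancestor[of z "depth x" "depth y"] assms unfolding is_ancestor_def by auto
  then show ?thesis using assms unfolding is_ancestor_def by auto
qed

lemma is_ancestor_if_common_descendant:
  assumes "is_ancestor x y" "is_ancestor z y" "depth x \<le> depth z"
  shows "is_ancestor x z"
  using assms ancestor_ancestor[of y "depth x" "depth z"] is_ancestor_in_U[OF assms(2)]
  unfolding is_ancestor_def by auto

lemma root_is_ancestor: "y \<in> U \<Longrightarrow> is_ancestor root y"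
  unfolding is_ancestor_def using depth_ancestor[of y 0] depth_eq_0_iff ancestor_in_U
  by (simp add: depth_root)

lemma is_ancestor_parent: "y \<in> U \<Longrightarrow> y \<noteq> root \<Longrightarrow> is_ancestor (parent y) y"
  unfolding is_ancestor_def using parent_ancestor_Suc[of y "depth (parent y)"] depth_parent
  by (metis ancestor_depth lessI order_less_imp_le)

lemma is_ancestor_of_parent:
  assumes "is_ancestor x y" "x \<noteq> y"
  shows "is_ancestor x (parent y)"
proof -
  have "y \<noteq> root" "y \<in> U"
    using assms depth_less_if_proper_ancestor depth_root is_ancestor_in_U by force+
  then show ?thesis
    using is_ancestor_if_common_descendant[OF assms(1) is_ancestor_parent]
      depth_less_if_proper_ancestor[OF assms] depth_parent by force
qed

definition children :: "'a \<Rightarrow> 'a set" where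
  "children x = {c \<in> U. c \<noteq> root \<and> parent c = x}"

lemma finite_children: "finite (children x)"
  using finite_U unfolding children_def by simp

lemma is_ancestor_child: "c \<in> children x \<Longrightarrow> is_ancestor x c \<and> x \<noteq> c"
  unfolding children_def using is_ancestor_parent depth_parent by force

definition child_towards :: "'a \<Rightarrow> 'a \<Rightarrow> 'a" where
  "child_towards x y = ancestor (Suc (depth x)) y"

lemma child_towards:
  assumes "is_ancestor x y" "x \<noteq> y"
  shows "child_towards x y \<in> children x" "is_ancestor (child_towards x y) y"
proof -
  have y: "y \<in> U" "depth x < depth y" "ancestor (depth x) y = x"
    using assms depth_less_if_proper_ancestor unfolding is_ancestor_def by auto
  have "child_towards x y \<in> U" "depth (child_towards x y) = Suc (depth x)"
    unfolding child_towards_def using y ancestor_in_U depth_ancestor by auto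
  moreover have "parent (child_towards x y) = x"
    unfolding child_towards_def using parent_ancestor_Suc y by simp
  ultimately show "child_towards x y \<in> children x" "is_ancestor (child_towards x y) y"
    unfolding children_def is_ancestor_def child_towards_def using y depth_root by auto
qed

lemma child_towards_eq:
  assumes "is_ancestor x z" "x \<noteq> z" "is_ancestor z y"
  shows "child_towards x y = child_towards x z"
  using assms depth_less_if_proper_ancestor[OF assms(1,2)]
    ancestor_ancestor[of y "Suc (depth x)" "depth z"]
  unfolding is_ancestor_def child_towards_def by auto

definition subtree :: "'a \<Rightarrow> 'a set" where
  "subtree x = {y. is_ancestor x y}"

definition subtree_size :: "'a \<Rightarrow> nat" where
  "subtree_size x = card (subtree x)"

lemma subtree_subset: "subtree x \<subseteq> U"
  unfolding subtree_def using is_ancestor_in_U by blast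

lemma finite_subtree: "finite (subtree x)"
  using finite_subset[OF subtree_subset finite_U] .

lemma subtree_size_pos: "x \<in> U \<Longrightarrow> 0 < subtree_size x"
  unfolding subtree_size_def using finite_subtree is_ancestor_refl
  by (auto simp: subtree_def card_gt_0_iff)

lemma subtree_size_le_card: "subtree_size x \<le> card U"
  unfolding subtree_size_def using card_mono[OF finite_U subtree_subset] .

lemma subtree_size_mono: "is_ancestor x y \<Longrightarrow> subtree_size y \<le> subtree_size x"
  unfolding subtree_size_def using is_ancestor_trans
  by (intro card_mono[OF finite_subtree]) (auto simp: subtree_def)

lemma depth_child: "c \<in> children x \<Longrightarrow> depth c = Suc (depth x)"
  unfolding children_def using depth_parent by auto

lemma sum_subtree_size_children_less:
  assumes "x \<in> U"
  shows "(\<Sum>c\<in>children x. subtree_size c) < subtree_size x"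
proof -
  have disjoint: "subtree c \<inter> subtree c' = {}"
    if "c \<in> children x" "c' \<in> children x" "c \<noteq> c'" for c c'
  proof -
    have "depth c = depth c'" using that depth_child by simp
    have "\<not> (is_ancestor c y \<and> is_ancestor c' y)" for y
    proof
      assume "is_ancestor c y \<and> is_ancestor c' y"
      then have "is_ancestor c c'"
        using is_ancestor_if_common_descendant[of c y c'] \<open>depth c = depth c'\<close> by simp
      then show False
        using is_ancestor_eq_if_depth_le[of c c'] \<open>depth c = depth c'\<close> that(3) by simp
    qed
    then show ?thesis unfolding subtree_def by blast
  qed
  have below: "(\<Union>c\<in>children x. subtree c) \<subseteq> subtree x - {x}"
  proof
    fix z assume "z \<in> (\<Union>c\<in>children x. subtree c)"
    then obtain c where c: "c \<in> children x" "is_ancestor c z" unfolding subtree_def by blast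
    then have "is_ancestor x z" using is_ancestor_child is_ancestor_trans by blast
    moreover have "depth x < depth z"
      using c depth_child[OF c(1)] unfolding is_ancestor_def by simp
    ultimately show "z \<in> subtree x - {x}" unfolding subtree_def by auto
  qed
  have "(\<Sum>c\<in>children x. subtree_size c) = card (\<Union>c\<in>children x. subtree c)"
    unfolding subtree_size_def using disjoint finite_subtree finite_children
    by (simp add: card_UN_disjoint)
  also have "\<dots> \<le> card (subtree x - {x})"
    using below finite_subtree by (intro card_mono) auto
  also have "\<dots> < subtree_size x"
    unfolding subtree_size_def
    by (intro card_Diff1_less finite_subtree) (simp add: subtree_def is_ancestor_refl[OF assms])
  finally show ?thesis .
qed

definition rank :: "'a \<Rightarrow> nat" where
  "rank x = floor_log (subtree_size x)"

lemma rank_mono: "is_ancestor x y \<Longrightarrow> rank y \<le> rank x"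
  unfolding rank_def using subtree_size_mono floor_log_le_iff by blast

lemma rank_le_floor_log_card: "rank x \<le> floor_log (card U)"
  unfolding rank_def using subtree_size_le_card floor_log_le_iff by blast

definition slot :: "'a \<Rightarrow> 'a \<Rightarrow> nat" where
  "slot x = (SOME s. inj_on s (children x) \<and>
     (\<forall>c\<in>children x. s c + subtree_size c \<le> (\<Sum>c\<in>children x. subtree_size c)) \<and>
     (\<forall>c\<in>children x. \<forall>c'\<in>children x. s c < s c' \<longrightarrow>
        s c + subtree_size c \<le> s c' \<and> subtree_size c' \<le> subtree_size c))"

lemma slot:
  "inj_on (slot x) (children x) \<and>
   (\<forall>c\<in>children x. slot x c + subtree_size c \<le> (\<Sum>c\<in>children x. subtree_size c)) \<and>
   (\<forall>c\<in>children x. \<forall>c'\<in>children x. slot x c < slot x c' \<longrightarrow>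
      slot x c + subtree_size c \<le> slot x c' \<and> subtree_size c' \<le> subtree_size c)"
proof -
  have "\<forall>c\<in>children x. 0 < subtree_size c"
    using subtree_size_pos unfolding children_def by blast
  from heavy_first_packing[OF finite_children this] show ?thesis
    unfolding slot_def by (rule someI_ex)
qed

definition position :: "'a \<Rightarrow> nat" where
  "position c = slot (parent c) c"

lemma children_differ_at_bit:
  assumes "x \<in> U" "c \<in> children x" "c' \<in> children x" "c \<noteq> c'"
  shows "\<exists>i. rank c \<le> i \<and> rank c' \<le> i \<and> i \<le> rank x \<and> bit (position c) i \<noteq> bit (position c') i"
proof -
  have pos: "position d = slot x d" if "d \<in> children x" for d
    using that unfolding position_def children_def by simp
  have ordered: "\<exists>i. rank c1 \<le> i \<and> rank c2 \<le> i \<and> i \<le> rank x \<and>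
      bit (position c1) i \<noteq> bit (position c2) i"
    if c: "c1 \<in> children x" "c2 \<in> children x" "position c1 < position c2" for c1 c2
  proof -
    have gap: "position c1 + subtree_size c1 \<le> position c2"
      and heavier: "subtree_size c2 \<le> subtree_size c1"
      using slot[of x] c unfolding pos[OF c(1)] pos[OF c(2)] by auto
    have "2 ^ rank c1 \<le> subtree_size c1"
      unfolding rank_def using c(1) floor_log_exp2_le subtree_size_pos
      unfolding children_def by blast
    then have "position c1 + 2 ^ rank c1 \<le> position c2" using gap by linarith
    moreover have "position c2 < 2 ^ Suc (rank x)"
    proof -
      have "position c2 + subtree_size c2 \<le> (\<Sum>c\<in>children x. subtree_size c)"
        using slot[of x] c(2) unfolding pos[OF c(2)] by blast
      then have "position c2 < subtree_size x"
        using sum_subtree_size_children_less[OF assms(1)] subtree_size_pos c(2)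
        unfolding children_def by fastforce
      also have "\<dots> < 2 ^ Suc (rank x)" unfolding rank_def using floor_log_exp2_gt by simp
      finally show ?thesis .
    qed
    ultimately obtain i where "rank c1 \<le> i" "i \<le> rank x" "bit (position c1) i \<noteq> bit (position c2) i"
      using exists_bit_neq_if_far_apart by blast
    moreover have "rank c2 \<le> rank c1"
      unfolding rank_def using heavier floor_log_le_iff by blast
    ultimately show ?thesis by (intro exI[of _ i]) auto
  qed
  have "position c \<noteq> position c'"
    using slot[of x] assms(2-4) pos unfolding inj_on_def by metis
  then consider "position c < position c'" | "position c' < position c" by linarith
  then show ?thesis
    using ordered[OF assms(2,3)] ordered[OF assms(3,2)] by cases metis+
qed

lemma is_ancestor_not_root: "is_ancestor x y \<Longrightarrow> x \<noteq> y \<Longrightarrow> y \<noteq> root"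
  using depth_less_if_proper_ancestor[of x y] depth_root by auto

lemma ancestor_is_ancestor:
  assumes "y \<in> U" "d \<le> e" "e \<le> depth y"
  shows "is_ancestor (ancestor d y) (ancestor e y)"
proof -
  have "depth (ancestor d y) = d" "depth (ancestor e y) = e"
    using assms depth_ancestor by auto
  then show ?thesis
    using assms ancestor_in_U ancestor_ancestor unfolding is_ancestor_def by simp
qed

subsection \<open>The category system of a rooted tree\<close>

definition height :: nat where
  "height = Max (depth ` U)"

lemma depth_le_height: "y \<in> U \<Longrightarrow> depth y \<le> height"
  unfolding height_def using finite_U by simp

text \<open>The bit \<open>i\<close> only distinguishes branches at \<open>x\<close>; the depth bound \<open>j\<close> is what
  separates a vertex from its children on the same branch, as needed when routing moves up.\<close>

definition tree_category :: "'a \<Rightarrow> nat \<Rightarrow> bool \<Rightarrow> nat \<Rightarrow> 'a set" where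
  "tree_category x i b j = insert x {y. is_ancestor x y \<and> x \<noteq> y \<and>
     rank (child_towards x y) \<le> i \<and> i \<le> rank x \<and>
     (bit (position (child_towards x y)) i = b \<or> depth y \<le> j)}"

definition tree_categories :: "'a set set" where
  "tree_categories =
     (\<lambda>(x, i, b, j). tree_category x i b j) ` (U \<times> {..floor_log (card U)} \<times> UNIV \<times> {..height})
     \<union> (\<lambda>y. {y}) ` U"

lemma is_ancestor_if_mem_tree_category:
  "x \<in> U \<Longrightarrow> y \<in> tree_category x i b j \<Longrightarrow> is_ancestor x y"
  unfolding tree_category_def using is_ancestor_refl by auto

lemma tree_categories_subset_Pow: "tree_categories \<subseteq> Pow U"
proof -
  have "tree_category x i b j \<subseteq> U" if "x \<in> U" for x i b j
    using is_ancestor_if_mem_tree_category[OF that] is_ancestor_in_U by blast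
  then show ?thesis unfolding tree_categories_def by blast
qed

lemma finite_tree_categories: "finite tree_categories"
  unfolding tree_categories_def using finite_U by simp

lemma tree_category_in_tree_categories:
  "x \<in> U \<Longrightarrow> i \<le> rank x \<Longrightarrow> j \<le> height \<Longrightarrow> tree_category x i b j \<in> tree_categories"
  unfolding tree_categories_def using rank_le_floor_log_card[of x]
  by (intro UnI1 image_eqI[of _ _ "(x, i, b, j)"]) auto

lemma tree_category_path_closed:
  assumes "y \<in> tree_category x i b j" "is_ancestor x z" "is_ancestor z y"
  shows "z \<in> tree_category x i b j"
proof (cases "x = z")
  case False
  have "x \<noteq> y"
  proof
    assume "x = y"
    then have "depth z \<le> depth x" using assms(3) unfolding is_ancestor_def by simp
    then show False using is_ancestor_eq_if_depth_le[OF assms(2)] False by simp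
  qed
  then have "rank (child_towards x y) \<le> i \<and> i \<le> rank x \<and>
      (bit (position (child_towards x y)) i = b \<or> depth y \<le> j)"
    using assms(1) unfolding tree_category_def by simp
  moreover have "child_towards x y = child_towards x z"
    using child_towards_eq[OF assms(2) False assms(3)] .
  moreover have "depth z \<le> depth y" using assms(3) unfolding is_ancestor_def by simp
  ultimately show ?thesis
    unfolding tree_category_def using assms(2) False by auto
qed (simp add: tree_category_def)

lemma tree_category_separates_parent:
  assumes "is_ancestor a u" "a \<noteq> u" "rank (child_towards a u) \<le> i" "i \<le> rank a"
    and "b \<noteq> bit (position (child_towards a u)) i"
  shows "parent u \<in> tree_category a i b (depth (parent u))"
    and "u \<notin> tree_category a i b (depth (parent u))"
proof -
  have u: "u \<in> U" "u \<noteq> root"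
    using assms(1,2) is_ancestor_in_U is_ancestor_not_root by auto
  show "u \<notin> tree_category a i b (depth (parent u))"
    using assms(2,5) depth_parent[OF u] unfolding tree_category_def by auto
  have "is_ancestor a (parent u)" using assms(1,2) by (rule is_ancestor_of_parent)
  moreover have "a \<noteq> parent u \<Longrightarrow> child_towards a u = child_towards a (parent u)"
    using child_towards_eq[OF _ _ is_ancestor_parent[OF u]] calculation by blast
  ultimately show "parent u \<in> tree_category a i b (depth (parent u))"
    using assms(3,4) unfolding tree_category_def by auto
qed

definition next_hop :: "'a \<Rightarrow> 'a \<Rightarrow> 'a" where
  "next_hop u w = (if is_ancestor u w then child_towards u w else parent u)"

lemma next_hop_tree_edge:
  assumes "u \<in> U" "w \<in> U" "u \<noteq> w"
  shows "(u \<noteq> root \<and> next_hop u w = parent u) \<or>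
    (next_hop u w \<in> U \<and> next_hop u w \<noteq> root \<and> parent (next_hop u w) = u)"
proof (cases "is_ancestor u w")
  case True
  then show ?thesis
    using child_towards(1)[OF True assms(3)] unfolding next_hop_def children_def by simp
next
  case False
  then show ?thesis using root_is_ancestor[OF assms(2)] unfolding next_hop_def by auto
qed

lemma next_hop_stays_in_common_categories:
  assumes "u \<in> U" "w \<in> U" "u \<noteq> w" "C \<in> tree_categories" "u \<in> C" "w \<in> C"
  shows "next_hop u w \<in> C"
proof -
  obtain x i b j where x: "x \<in> U" and C: "C = tree_category x i b j"
    using assms(3-6) unfolding tree_categories_def by auto
  have xu: "is_ancestor x u" and xw: "is_ancestor x w"
    using assms(5,6) is_ancestor_if_mem_tree_category[OF x] unfolding C by auto
  show ?thesis
  proof (cases "is_ancestor u w")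
    case True
    have "is_ancestor x (child_towards u w)"
      using xu child_towards[OF True assms(3)] is_ancestor_child is_ancestor_trans by blast
    then show ?thesis
      using tree_category_path_closed assms(6) child_towards(2)[OF True assms(3)]
      unfolding next_hop_def C by (simp add: True)
  next
    case False
    then have "x \<noteq> u" using xw by auto
    then show ?thesis
      using tree_category_path_closed[OF assms(5)[unfolded C] is_ancestor_of_parent[OF xu]]
        is_ancestor_parent[OF assms(1) is_ancestor_not_root[OF xu]] False
      unfolding next_hop_def C by simp
  qed
qed

lemma next_hop_descending_gains_category:
  assumes "is_ancestor u w" "u \<noteq> w"
  shows "\<exists>C\<in>tree_categories. w \<in> C \<and> next_hop u w \<in> C \<and> u \<notin> C"
proof -
  define v where "v = child_towards u w"
  have v: "v \<in> children u" "is_ancestor v w"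
    using child_towards[OF assms] unfolding v_def by auto
  show ?thesis
  proof (cases "v = w")
    case True
    then show ?thesis
      using assms is_ancestor_in_U unfolding tree_categories_def next_hop_def v_def by auto
  next
    case False
    define c where "c = child_towards v w"
    define C where "C = tree_category v (rank c) (bit (position c) (rank c)) 0"
    have vU: "v \<in> U" using v(1) unfolding children_def by simp
    have "rank c \<le> rank v"
      unfolding c_def using rank_mono is_ancestor_child[OF child_towards(1)[OF v(2) False]] by blast
    then have "C \<in> tree_categories"
      unfolding C_def by (intro tree_category_in_tree_categories[OF vU]) auto
    moreover have "w \<in> C" "v \<in> C"
      using v(2) False \<open>rank c \<le> rank v\<close> unfolding C_def tree_category_def c_def by auto
    moreover have "u \<notin> C"
      using is_ancestor_child[OF v(1)] depth_less_if_proper_ancestor is_ancestor_if_mem_tree_category[OF vU]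
      unfolding C_def by (metis is_ancestor_def not_le)
    ultimately show ?thesis unfolding next_hop_def v_def using assms(1) by auto
  qed
qed

lemma exists_branching_ancestor:
  assumes "u \<in> U" "w \<in> U" "\<not> is_ancestor u w"
  shows "\<exists>a. is_ancestor a u \<and> a \<noteq> u \<and> is_ancestor a w \<and>
    (a = w \<or> child_towards a u \<noteq> child_towards a w)"
proof -
  let ?common = "\<lambda>a. is_ancestor a u \<and> is_ancestor a w"
  have "\<forall>a. ?common a \<longrightarrow> depth a < Suc (depth u)"
    unfolding is_ancestor_def by auto
  then obtain a where a: "?common a" and deepest: "\<And>a'. ?common a' \<Longrightarrow> depth a' \<le> depth a"
    using ex_has_greatest_nat[of ?common root depth] root_is_ancestor assms(1,2) by blast
  have "a \<noteq> u" using a assms(3) by auto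
  moreover have "child_towards a u \<noteq> child_towards a w" if "a \<noteq> w"
  proof
    assume "child_towards a u = child_towards a w"
    then have "?common (child_towards a u)"
      using child_towards(2) a \<open>a \<noteq> u\<close> that by metis
    then show False
      using deepest depth_child child_towards(1)[OF _ \<open>a \<noteq> u\<close>] a by fastforce
  qed
  ultimately show ?thesis using a by blast
qed

lemma next_hop_ascending_gains_category:
  assumes "u \<in> U" "w \<in> U" "\<not> is_ancestor u w"
  shows "\<exists>C\<in>tree_categories. w \<in> C \<and> next_hop u w \<in> C \<and> u \<notin> C"
proof -
  obtain a where a: "is_ancestor a u" "a \<noteq> u" "is_ancestor a w"
    and branch: "a = w \<or> child_towards a u \<noteq> child_towards a w"
    using exists_branching_ancestor[OF assms] by blast
  define cu where "cu = child_towards a u"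
  obtain i b where i: "rank cu \<le> i" "i \<le> rank a" "b \<noteq> bit (position cu) i"
    and w_in: "w \<in> tree_category a i b (depth (parent u))"
  proof (cases "a = w")
    case True
    have "rank cu \<le> rank a"
      unfolding cu_def using rank_mono is_ancestor_child[OF child_towards(1)[OF a(1,2)]] by blast
    then show ?thesis
      using that[of "rank cu" "\<not> bit (position cu) (rank cu)"] True
      unfolding tree_category_def by simp
  next
    case False
    define cw where "cw = child_towards a w"
    have "cu \<in> children a" "cw \<in> children a" "cu \<noteq> cw"
      using child_towards(1) a branch False unfolding cu_def cw_def by auto
    then obtain i where "rank cu \<le> i" "rank cw \<le> i" "i \<le> rank a"
      "bit (position cu) i \<noteq> bit (position cw) i"
      using children_differ_at_bit is_ancestor_in_U[OF a(1)] by blast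
    then show ?thesis
      using that[of i "bit (position cw) i"] a(3) False
      unfolding tree_category_def cw_def by auto
  qed
  have "tree_category a i b (depth (parent u)) \<in> tree_categories"
    using is_ancestor_in_U[OF a(1)] i(2) depth_le_height parent_in_U
      is_ancestor_not_root[OF a(1,2)] assms(1)
    by (intro tree_category_in_tree_categories) auto
  then show ?thesis
    using w_in tree_category_separates_parent[OF a(1,2) i[unfolded cu_def]] assms(3)
    unfolding next_hop_def by auto
qed

lemma cdist_next_hop_less:
  assumes "u \<in> U" "w \<in> U" "u \<noteq> w"
  shows "cdist tree_categories (next_hop u w) w < cdist tree_categories u w"
proof -
  obtain C where "C \<in> tree_categories" "w \<in> C" "next_hop u w \<in> C" "u \<notin> C"
    using next_hop_descending_gains_category[OF _ assms(3)] next_hop_ascending_gains_category[OF assms(1,2)]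
    by blast
  then show ?thesis
    using cdist_less_if_gains_category[OF finite_tree_categories]
      next_hop_stays_in_common_categories[OF assms] by blast
qed

text \<open>A vertex \<open>v\<close> lies in \<open>tree_category x i b j\<close> only for \<open>x = v\<close> or for an ancestor
  \<open>x\<close> of \<open>v\<close> with \<open>rank c \<le> i \<le> rank x\<close>, where \<open>c\<close> is the next vertex towards \<open>v\<close>; along
  the path from the root to \<open>v\<close> these ranges of \<open>i\<close> telescope.\<close>

lemma card_cat_tree_categories_le:
  assumes v: "v \<in> U"
  shows "card (cat tree_categories v) \<le> membership_bound (floor_log (card U)) height"
proof -
  define L where "L = floor_log (card U)"
  define r where "r k = rank (ancestor k v)" for k
  define I1 where "I1 = {v} \<times> {..L} \<times> (UNIV :: bool set) \<times> {..height}"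
  define I2 where "I2 = (\<Union>k<depth v. {ancestor k v} \<times> {r (Suc k)..r k} \<times> (UNIV :: bool set) \<times> {..height})"
  have index: "(x, i, b, j) \<in> I1 \<union> I2"
    if "x \<in> U" "i \<le> L" "j \<le> height" "v \<in> tree_category x i b j" for x i b j
  proof (cases "x = v")
    case False
    then have "is_ancestor x v" "rank (child_towards x v) \<le> i" "i \<le> rank x"
      using that(4) unfolding tree_category_def by auto
    moreover have "depth x < depth v" using calculation(1) False by (rule depth_less_if_proper_ancestor)
    ultimately show ?thesis
      using that(3) unfolding I2_def r_def child_towards_def is_ancestor_def
      by (intro UnI2 UN_I[of "depth x"]) auto
  qed (use that in \<open>simp add: I1_def\<close>)
  let ?f = "\<lambda>(x, i, b, j). tree_category x i b j"
  have "cat tree_categories v \<subseteq> insert {v} (?f ` (I1 \<union> I2))"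
  proof
    fix C assume "C \<in> cat tree_categories v"
    then have "C \<in> tree_categories" "v \<in> C" unfolding cat_def by auto
    then consider "C = {v}"
      | x i b j where "x \<in> U" "i \<le> L" "j \<le> height" "C = tree_category x i b j"
      unfolding tree_categories_def L_def[symmetric] by auto
    then show "C \<in> insert {v} (?f ` (I1 \<union> I2))"
    proof cases
      case (2 x i b j)
      then show ?thesis
        using index[OF 2(1-3)] \<open>v \<in> C\<close> by (auto intro!: image_eqI[of _ _ "(x, i, b, j)"])
    qed simp
  qed
  moreover have fin: "finite (I1 \<union> I2)" unfolding I1_def I2_def by simp
  ultimately have "card (cat tree_categories v) \<le> card (insert {v} (?f ` (I1 \<union> I2)))"
    by (intro card_mono) auto
  also have "\<dots> \<le> Suc (card (?f ` (I1 \<union> I2)))" using fin by (simp add: card_insert_if)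
  also have "\<dots> \<le> Suc (card (I1 \<union> I2))" using fin by (simp add: card_image_le)
  also have "\<dots> \<le> Suc (card I1 + card I2)" by (simp add: card_Un_le)
  finally have card_cat: "card (cat tree_categories v) \<le> Suc (card I1 + card I2)" .
  have card_I1: "card I1 = (L + 1) * (2 * (height + 1))"
    unfolding I1_def by (simp add: card_cartesian_product)
  have "card I2 \<le> (\<Sum>k<depth v. (r k + 1 - r (Suc k)) * (2 * (height + 1)))"
    unfolding I2_def by (rule order_trans[OF card_UN_le]) (auto simp: card_cartesian_product)
  also have "\<dots> = (\<Sum>k<depth v. r k + 1 - r (Suc k)) * (2 * (height + 1))"
    by (rule sum_distrib_right[symmetric])
  also have "\<dots> \<le> (L + height) * (2 * (height + 1))"
  proof (rule mult_le_mono1)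
    have antimono: "\<forall>k<depth v. r (Suc k) \<le> r k"
      unfolding r_def using rank_mono ancestor_is_ancestor[OF v] by simp
    then have "(\<Sum>k<depth v. r k + 1 - r (Suc k)) \<le> r 0 + depth v"
      using sum_telescope_antimono_nat[OF antimono] by linarith
    also have "\<dots> \<le> L + height"
      unfolding r_def L_def using rank_le_floor_log_card depth_le_height[OF v] by (rule add_mono)
    finally show "(\<Sum>k<depth v. r k + 1 - r (Suc k)) \<le> L + height" .
  qed
  finally have "card I2 \<le> (L + height) * (2 * (height + 1))" .
  with card_cat card_I1 show ?thesis
    unfolding membership_bound_def L_def[symmetric] by (simp add: algebra_simps)
qed

end

section \<open>Breadth-first spanning trees\<close>

definition bfs_parent :: "('a \<Rightarrow> 'a \<Rightarrow> bool) \<Rightarrow> 'a \<Rightarrow> 'a \<Rightarrow> 'a" where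
  "bfs_parent E r y = (SOME p. E p y \<and> Suc (graph_dist E r p) = graph_dist E r y)"

lemma bfs_parent:
  assumes "simple_graph U E" "connected_graph U E" "r \<in> U" "y \<in> U" "y \<noteq> r"
  shows "E (bfs_parent E r y) y" "Suc (graph_dist E r (bfs_parent E r y)) = graph_dist E r y"
  using someI_ex[OF exists_neighbour_closer[OF assms]] unfolding bfs_parent_def by blast+

lemma rooted_tree_bfs:
  assumes "simple_graph U E" "connected_graph U E" "r \<in> U"
  shows "rooted_tree U r (bfs_parent E r) (graph_dist E r)"
proof
  show "finite U" using assms(1) unfolding simple_graph_def by simp
  show "bfs_parent E r y \<in> U" if "y \<in> U" "y \<noteq> r" for y
    using bfs_parent(1)[OF assms that] assms(1) unfolding simple_graph_def by blast
qed (use assms bfs_parent(2) in auto)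

lemma exists_routing_category_system:
  assumes "simple_graph U E" "connected_graph U E"
  shows "\<exists>S. S \<subseteq> Pow U \<and> routing_correct U E S \<and>
    memdim U S \<le> membership_bound (floor_log (card U)) (diam U E)"
proof -
  obtain r where r: "r \<in> U" using assms(2) unfolding connected_graph_def by blast
  interpret T: rooted_tree U r "bfs_parent E r" "graph_dist E r"
    using rooted_tree_bfs[OF assms r] .
  have parent_edge: "E u (bfs_parent E r u)" "E (bfs_parent E r u) u" if "u \<in> U" "u \<noteq> r" for u
    using bfs_parent(1)[OF assms r that] assms(1) unfolding simple_graph_def by blast+
  have "routing_correct U E T.tree_categories"
    unfolding routing_correct_def
  proof (intro ballI impI)
    fix u w assume uw: "u \<in> U" "w \<in> U" "u \<noteq> w"
    have "E u (T.next_hop u w)"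
      using T.next_hop_tree_edge[OF uw]
    proof
      assume "u \<noteq> r \<and> T.next_hop u w = bfs_parent E r u"
      then show ?thesis using parent_edge(1)[OF uw(1)] by simp
    next
      assume "T.next_hop u w \<in> U \<and> T.next_hop u w \<noteq> r \<and> bfs_parent E r (T.next_hop u w) = u"
      then show ?thesis using parent_edge(2)[of "T.next_hop u w"] by simp
    qed
    then show "\<exists>v. E u v \<and> cdist T.tree_categories v w < cdist T.tree_categories u w"
      using T.cdist_next_hop_less[OF uw] by blast
  qed
  moreover have "memdim U T.tree_categories \<le> membership_bound (floor_log (card U)) T.height"
    unfolding memdim_def using T.finite_U r T.card_cat_tree_categories_le by (subst Max_le_iff) auto
  moreover have "T.height \<le> diam U E"
    unfolding T.height_def using T.finite_U r graph_dist_le_diam[OF T.finite_U r]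
    by (subst Max_le_iff) auto
  ultimately show ?thesis
    using T.tree_categories_subset_Pow membership_bound_mono order_trans
    by (intro exI[of _ T.tree_categories]) blast
qed

lemma floor_log_le_two_ln:
  assumes "0 < n"
  shows "real (floor_log n) \<le> 2 * ln (real n)"
proof -
  have "1 \<le> 2 * ln (2 :: real)"
    using ln_le_minus_one[of "1 / 2 :: real"] by (simp add: ln_div)
  then have "real (floor_log n) \<le> 2 * (real (floor_log n) * ln 2)"
    using mult_left_mono[of 1 "2 * ln 2" "real (floor_log n)"] by (simp add: algebra_simps)
  also have "real (floor_log n) * ln 2 = ln (real (2 ^ floor_log n))"
    by (simp add: ln_realpow)
  also have "\<dots> \<le> ln (real n)"
    using floor_log_exp2_le[OF assms] assms by (subst ln_le_cancel_iff) simp_all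
  finally show ?thesis by simp
qed

lemma quadratic_bound_le_square:
  fixes h l L :: real
  assumes "1 \<le> h" "0 \<le> l" "l \<le> 2 * L"
  shows "1 + 2 * (l + 1) * (h + 1) + 2 * (h + 1) * (l + h) \<le> 36 * (h + L)^2"
proof -
  have "1 + 2 * (l + 1) * (h + 1) + 2 * (h + 1) * (l + h) = 3 + 4*l*h + 4*l + 4*h + 2*h^2"
    by (simp add: algebra_simps power2_eq_square)
  also have "\<dots> \<le> 9 * h^2 + 8 * h * l"
  proof -
    have "1 \<le> h^2" "h \<le> h^2" "l \<le> h * l"
      using assms(1,2) mult_mono[of 1 h 1 h] mult_right_mono[of 1 h h] mult_right_mono[of 1 h l]
      by (simp_all add: power2_eq_square)
    then show ?thesis by (simp add: algebra_simps)
  qed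
  also have "\<dots> \<le> 9 * (h + l)^2" using assms by (simp add: power2_eq_square algebra_simps)
  also have "\<dots> \<le> 9 * (2 * (h + L))^2"
    using assms by (intro mult_left_mono power_mono) auto
  also have "\<dots> = 36 * (h + L)^2" by (simp add: power2_eq_square algebra_simps)
  finally show ?thesis .
qed

lemma category_bound_le_square:
  assumes "0 < n" "0 < D"
  shows "real (membership_bound (floor_log n) D) \<le> 36 * (real D + ln (real n))^2"
proof -
  have "real (membership_bound (floor_log n) D)
      = 1 + 2 * (real (floor_log n) + 1) * (real D + 1) + 2 * (real D + 1) * (real (floor_log n) + real D)"
    unfolding membership_bound_def by (simp only: of_nat_add of_nat_mult of_nat_1 of_nat_numeral)
  also have "\<dots> \<le> 36 * (real D + ln (real n))^2"
    using floor_log_le_two_ln[OF assms(1)] assms(2) by (intro quadratic_bound_le_square) simp_all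
  finally show ?thesis .
qed

lemma diam_eq_0_imp_singleton:
  assumes "finite U" "connected_graph U E" "diam U E = 0" "u \<in> U" "v \<in> U"
  shows "u = v"
  using graph_dist_le_diam[OF assms(1,4,5), of E] graph_dist_eq_0_iff[OF assms(2,4,5)] assms(3) by simp

theorem theorem2:
  shows "\<exists>c::real. c > 0 \<and>
    (\<forall>(U :: nat set) (E :: nat \<Rightarrow> nat \<Rightarrow> bool).
       simple_graph U E \<and> connected_graph U E \<longrightarrow>
       (\<exists>S. S \<subseteq> Pow U \<and> routing_correct U E S \<and>
            real (memdim U S) \<le> c * (real (diam U E) + ln (real (card U)))^2))"
proof (intro exI[of _ 36] conjI allI impI)
  fix U :: "nat set" and E :: "nat \<Rightarrow> nat \<Rightarrow> bool"
  assume "simple_graph U E \<and> connected_graph U E"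
  then have G: "simple_graph U E" "connected_graph U E" by simp_all
  then have fin: "finite U" and ne: "U \<noteq> {}"
    unfolding simple_graph_def connected_graph_def by auto
  show "\<exists>S. S \<subseteq> Pow U \<and> routing_correct U E S \<and>
      real (memdim U S) \<le> 36 * (real (diam U E) + ln (real (card U)))^2"
  proof (cases "diam U E = 0")
    case True
    then have "routing_correct U E {}"
      using diam_eq_0_imp_singleton[OF fin G(2)] unfolding routing_correct_def by blast
    moreover have "memdim U {} = 0"
      using ne by (simp add: memdim_def cat_def image_constant_conv)
    ultimately show ?thesis by auto
  next
    case False
    obtain S where S: "S \<subseteq> Pow U" "routing_correct U E S"
      "memdim U S \<le> membership_bound (floor_log (card U)) (diam U E)"
      using exists_routing_category_system[OF G] by blast
    have "real (memdim U S) \<le> 36 * (real (diam U E) + ln (real (card U)))^2"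
      using fin ne False
      by (intro order_trans[OF of_nat_mono[OF S(3)] category_bound_le_square]) (simp_all add: card_gt_0_iff)
    with S(1,2) show ?thesis by blast
  qed
qed simp

end
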